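(* Let $f_1,f_2:\mathbb{R}\to\mathbb{R}$ be bounded measurable $1$-periodic functions, $a_1,a_2>0$, $c=(c_1,c_2)\in\mathbb{R}^2$, $\varepsilon>0$, and let $u^\varepsilon(t;c)=(u_1^\varepsilon,u_2^\varepsilon)$ be the unique solution of \[\dot u^\varepsilon_1=-\tfrac{a_1}{\varepsilon}(u^\varepsilon_1-u^\varepsilon_2)+f_1(t/\varepsilon),\quad \dot u^\varepsilon_2=-\tfrac{a_2}{\varepsilon}(u^\varepsilon_2-u^\varepsilon_1)+f_2(t/\varepsilon),\quad t>0,\quad u_i^\varepsilon(0)=c_i.\] Then for all $t>0$ and $i\in\{1,2\}$, \[|u^\varepsilon_i(t;c)-m_i(t)|\leq \bigg(\frac{2a_2(a_1+a_2)+a_i}{(a_1+a_2)^2}\|f_1\|_\infty+\frac{2a_1(a_1+a_2)+a_i}{(a_1+a_2)^2}\|f_2\|_\infty\bigg)\varepsilon,\] where, for $\{i,j\}=\{1,2\}$, \[m_i(t)=\frac{c_1a_2+c_2a_1}{a_1+a_2}+\frac{a_2\bar f_1+a_1\bar f_2}{a_1+a_2}t+\frac{a_i(c_i-c_j)}{a_1+a_2}e^{-\frac{(a_1+a_2)t}{\varepsilon}},\qquad \bar f_k=\int_0^1 f_k(s)\,ds.\] *)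

theory Defs
  imports "HOL-Analysis.Analysis" "HOL-Probability.Essential_Supremum"
begin

definition Linf_norm :: "(real \<Rightarrow> real) \<Rightarrow> real" where
  "Linf_norm f = real_of_ereal (esssup lebesgue (\<lambda>x. ereal \<bar>f x\<bar>))"

end

(*
  The coupling cancels in the weighted mean S = a2 u1 + a1 u2, so S is its initial value plus the
  integrals of the rescaled forcings f_i(s/eps); by periodicity these grow like t times the mean of
  f_i, up to an error of 2 eps ||f_i||.  The difference w = u1 - u2 solves the linear Volterra
  equation w = (c1 - c2) - ((a1 + a2)/eps) int w + G, where G is Lipschitz with constant
  ||f1|| + ||f2||; a last-crossing comparison argument bounds w - (c1 - c2) exp(-(a1 + a2) t/eps)
  by (||f1|| + ||f2||) eps/(a1 + a2).  The estimates follow from u1 = (S + a1 w)/(a1 + a2) and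
  u2 = (S - a2 w)/(a1 + a2).
*)

theory Submission
  imports Defs
begin

lemma esssup_abs_nonneg:
  fixes f :: "real \<Rightarrow> real"
  shows "0 \<le> esssup lebesgue (\<lambda>x. ereal \<bar>f x\<bar>)"
proof -
  have "esssup lebesgue (\<lambda>x::real. ereal 0) \<le> esssup lebesgue (\<lambda>x. ereal \<bar>f x\<bar>)"
    using esssup_mono[of "\<lambda>x. ereal 0" lebesgue "\<lambda>x. ereal \<bar>f x\<bar>"] by simp
  then show ?thesis
    by (simp add: esssup_const emeasure_lborel_UNIV zero_ereal_def)
qed

text \<open>No hypotheses are needed: an infinite essential supremum is sent to 0 by
  \<^const>\<open>real_of_ereal\<close>.\<close>

lemma Linf_norm_nonneg: "0 \<le> Linf_norm f"
  using esssup_abs_nonneg[of f] by (simp add: Linf_norm_def real_of_ereal_pos)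

lemma AE_abs_le_Linf_norm:
  fixes f :: "real \<Rightarrow> real"
  assumes "f \<in> borel_measurable lebesgue" and "bounded (range f)"
  shows "AE x in lebesgue. \<bar>f x\<bar> \<le> Linf_norm f"
proof -
  obtain B where B: "\<And>x. \<bar>f x\<bar> \<le> B"
    using assms(2) unfolding bounded_iff by auto
  have "esssup lebesgue (\<lambda>x. ereal \<bar>f x\<bar>) \<le> ereal B"
    using assms(1) B by (intro esssup_I) auto
  with esssup_abs_nonneg[of f]
  have "esssup lebesgue (\<lambda>x. ereal \<bar>f x\<bar>) = ereal (Linf_norm f)"
    unfolding Linf_norm_def by (cases "esssup lebesgue (\<lambda>x. ereal \<bar>f x\<bar>)") auto
  then show ?thesis
    using esssup_AE[of "\<lambda>x. ereal \<bar>f x\<bar>" lebesgue] by simp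
qed

lemma bounded_measurable_integrable_on:
  fixes f :: "real \<Rightarrow> real"
  assumes "f \<in> borel_measurable lebesgue" and "bounded (range f)"
  shows "f integrable_on {a..b}"
proof -
  obtain B where B: "\<And>x. \<bar>f x\<bar> \<le> B"
    using assms(2) unfolding bounded_iff by auto
  show ?thesis
    by (rule measurable_bounded_by_integrable_imp_integrable_real[where g="\<lambda>_. B"])
       (auto intro: B measurable_restrict_space1 assms(1))
qed

lemma abs_integral_le_Linf_norm:
  fixes f :: "real \<Rightarrow> real"
  assumes "f \<in> borel_measurable lebesgue" and "bounded (range f)" and "a \<le> b"
  shows "\<bar>integral {a..b} f\<bar> \<le> Linf_norm f * (b - a)"
proof -
  obtain N where N: "N \<in> null_sets lebesgue" "\<And>x. x \<notin> N \<Longrightarrow> \<bar>f x\<bar> \<le> Linf_norm f"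
    using AE_E3[OF AE_abs_le_Linf_norm[OF assms(1,2)]] by auto
  define g where "g x = (if x \<in> N then 0 else f x)" for x
  have "negligible N"
    using N(1) negligible_iff_null_sets by blast
  then have "integral {a..b} f = integral {a..b} g" and "g integrable_on {a..b}"
    using integrable_spike[OF bounded_measurable_integrable_on[OF assms(1,2)] \<open>negligible N\<close>,
        where g=g]
    by (auto intro!: integral_spike simp: g_def)
  moreover have "\<bar>g x\<bar> \<le> Linf_norm f" for x
    using N(2) Linf_norm_nonneg by (auto simp: g_def)
  ultimately show ?thesis
    using has_integral_bound[OF Linf_norm_nonneg[of f], where f=g and i="integral {a..b} g"
        and a=a and b=b] assms(3)
    by (simp add: cbox_interval has_integral_integral)
qed

lemma has_integral_rescale:
  fixes f :: "real \<Rightarrow> 'a::real_normed_vector"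
  assumes "\<epsilon> > 0" and "f integrable_on {a/\<epsilon>..b/\<epsilon>}"
  shows "((\<lambda>s. f (s/\<epsilon>)) has_integral \<epsilon> *\<^sub>R integral {a/\<epsilon>..b/\<epsilon>} f) {a..b}"
proof -
  have "(f has_integral integral {a/\<epsilon>..b/\<epsilon>} f) (cbox (a/\<epsilon>) (b/\<epsilon>))"
    using assms(2) by (simp add: cbox_interval has_integral_integral)
  from has_integral_affinity'[OF this, of "1/\<epsilon>" 0] assms(1) show ?thesis
    by (simp add: cbox_interval field_simps)
qed

lemma periodic_add_nat:
  assumes "\<And>x. f (x + 1) = f x"
  shows "f (x + real n) = f x"
proof (induction n)
  case (Suc n)
  then show ?case
    using assms[of "x + real n"] by (simp add: algebra_simps)
qed simp

lemma integral_periodic_nat: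
  fixes f :: "real \<Rightarrow> 'a::banach"
  assumes per: "\<And>x. f (x + 1) = f x" and int: "\<And>a b. f integrable_on {a..b}"
  shows "integral {0..real n} f = real n *\<^sub>R integral {0..1} f"
proof (induction n)
  case (Suc n)
  have "integral {real n..real n + 1} f = integral {0..1} (f \<circ> (+) (real n))"
    using integral_shift_Icc_real[where f=f and c="real n" and a=0 and b=1]
    by (simp add: add.commute)
  also have "\<dots> = integral {0..1} f"
    using periodic_add_nat[of f, OF per] by (simp add: o_def add.commute)
  finally show ?case
    using Suc Henstock_Kurzweil_Integration.integral_combine[of 0 "real n" "real n + 1" f] int
    by (simp add: algebra_simps)
qed simp

lemma abs_integral_periodic_sub_le:
  fixes f :: "real \<Rightarrow> real"
  assumes meas: "f \<in> borel_measurable lebesgue" and bdd: "bounded (range f)"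
    and per: "\<And>x. f (x + 1) = f x" and "0 \<le> T"
  shows "\<bar>integral {0..T} f - T * integral {0..1} f\<bar> \<le> 2 * Linf_norm f"
proof -
  define n where "n = nat \<lfloor>T\<rfloor>"
  have n: "real n \<le> T" "T - real n \<le> 1"
    using \<open>0 \<le> T\<close> unfolding n_def by linarith+
  note int = bounded_measurable_integrable_on[OF meas bdd]
  have "integral {0..T} f = real n * integral {0..1} f + integral {real n..T} f"
    using Henstock_Kurzweil_Integration.integral_combine[of 0 "real n" T f] int n
      integral_periodic_nat[OF per int]
    by simp
  then have "integral {0..T} f - T * integral {0..1} f
      = integral {real n..T} f - (T - real n) * integral {0..1} f"
    by (simp add: algebra_simps)
  moreover have "\<bar>integral {real n..T} f\<bar> \<le> Linf_norm f"
    using abs_integral_le_Linf_norm[OF meas bdd n(1)] mult_left_le[OF n(2) Linf_norm_nonneg[of f]]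
    by linarith
  moreover have "\<bar>(T - real n) * integral {0..1} f\<bar> \<le> Linf_norm f"
    using abs_integral_le_Linf_norm[OF meas bdd, of 0 1] n
      mult_left_le_one_le[of "\<bar>integral {0..1} f\<bar>" "T - real n"]
    by (simp add: abs_mult)
  ultimately show ?thesis
    by linarith
qed

lemma integrable_on_rescaled:
  fixes f :: "real \<Rightarrow> real"
  assumes "f \<in> borel_measurable lebesgue" and "bounded (range f)" and "\<epsilon> > 0"
  shows "(\<lambda>s. f (s/\<epsilon>)) integrable_on {a..b}"
  using has_integral_rescale[OF assms(3) bounded_measurable_integrable_on[OF assms(1,2)]] by blast

lemma abs_integral_rescaled_diff_le:
  fixes f :: "real \<Rightarrow> real"
  assumes meas: "f \<in> borel_measurable lebesgue" and bdd: "bounded (range f)"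
    and "\<epsilon> > 0" and "0 \<le> s" and "s \<le> t"
  shows "\<bar>integral {0..t} (\<lambda>r. f (r/\<epsilon>)) - integral {0..s} (\<lambda>r. f (r/\<epsilon>))\<bar>
    \<le> Linf_norm f * (t - s)"
proof -
  have "integral {0..t} (\<lambda>r. f (r/\<epsilon>)) - integral {0..s} (\<lambda>r. f (r/\<epsilon>))
      = integral {s..t} (\<lambda>r. f (r/\<epsilon>))"
    using Henstock_Kurzweil_Integration.integral_combine[OF assms(4,5)
        integrable_on_rescaled[OF assms(1-3)]]
    by simp
  also have "\<dots> = \<epsilon> * integral {s/\<epsilon>..t/\<epsilon>} f"
    using has_integral_rescale[OF assms(3) bounded_measurable_integrable_on[OF meas bdd]]
    by (simp add: integral_unique)
  finally have "\<bar>integral {0..t} (\<lambda>r. f (r/\<epsilon>)) - integral {0..s} (\<lambda>r. f (r/\<epsilon>))\<bar>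
      = \<epsilon> * \<bar>integral {s/\<epsilon>..t/\<epsilon>} f\<bar>"
    using \<open>\<epsilon> > 0\<close> by (simp add: abs_mult)
  also have "\<dots> \<le> \<epsilon> * (Linf_norm f * (t/\<epsilon> - s/\<epsilon>))"
    using abs_integral_le_Linf_norm[OF meas bdd] assms(3,5)
    by (simp add: divide_right_mono)
  also have "\<dots> = Linf_norm f * (t - s)"
    using \<open>\<epsilon> > 0\<close> by (simp add: field_simps)
  finally show ?thesis .
qed

lemma abs_integral_rescaled_periodic_sub_le:
  fixes f :: "real \<Rightarrow> real"
  assumes meas: "f \<in> borel_measurable lebesgue" and bdd: "bounded (range f)"
    and per: "\<And>x. f (x + 1) = f x" and "\<epsilon> > 0" and "0 \<le> t"
  shows "\<bar>integral {0..t} (\<lambda>s. f (s/\<epsilon>)) - t * integral {0..1} f\<bar>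
    \<le> 2 * \<epsilon> * Linf_norm f"
proof -
  have "integral {0..t} (\<lambda>s. f (s/\<epsilon>)) = \<epsilon> * integral {0..t/\<epsilon>} f"
    using has_integral_rescale[OF assms(4) bounded_measurable_integrable_on[OF meas bdd], of 0 t]
    by (simp add: integral_unique)
  also have "\<dots> = \<epsilon> * (integral {0..t/\<epsilon>} f - t/\<epsilon> * integral {0..1} f)
      + t * integral {0..1} f"
    using \<open>\<epsilon> > 0\<close> by (simp add: right_diff_distrib)
  finally have "\<bar>integral {0..t} (\<lambda>s. f (s/\<epsilon>)) - t * integral {0..1} f\<bar>
      = \<epsilon> * \<bar>integral {0..t/\<epsilon>} f - t/\<epsilon> * integral {0..1} f\<bar>"
    using \<open>\<epsilon> > 0\<close> by (simp add: abs_mult)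
  also have "\<dots> \<le> \<epsilon> * (2 * Linf_norm f)"
    using abs_integral_periodic_sub_le[OF meas bdd per, of "t/\<epsilon>"] assms(4,5) by simp
  finally show ?thesis
    by simp
qed

lemma last_level_crossing:
  fixes e :: "real \<Rightarrow> real"
  assumes cont: "continuous_on {a..b} e" and "a \<le> b" and "e a \<le> c" and "c < e b"
  obtains t0 where "t0 \<in> {a..b}" and "e t0 = c" and "\<And>x. x \<in> {t0..b} \<Longrightarrow> c \<le> e x"
proof -
  define S where "S = {s \<in> {a..b}. e s \<le> c}"
  have "a \<in> S" and S_bdd: "bdd_above S"
    using assms(2,3) unfolding S_def by (auto intro: bdd_aboveI[where M=b])
  moreover have "closed S"
    unfolding S_def by (rule continuous_on_closed_Collect_le[OF cont]) auto
  ultimately have "Sup S \<in> S"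
    by (intro closed_contains_Sup) auto
  then have t0: "Sup S \<in> {a..b}" "e (Sup S) \<le> c"
    unfolding S_def by auto
  have above: "c < e x" if "x \<in> {Sup S<..b}" for x
    using that cSup_upper[OF _ S_bdd, of x] t0 unfolding S_def by force
  obtain s where "s \<in> {Sup S..b}" "e s = c"
    using IVT'[of e "Sup S" c b] t0 \<open>c < e b\<close> continuous_on_subset[OF cont] by force
  then have "e (Sup S) = c"
    using above[of s] by (cases "s = Sup S") auto
  moreover have "c \<le> e x" if "x \<in> {Sup S..b}" for x
    using that above[of x] \<open>e (Sup S) = c\<close> by (cases "x = Sup S") auto
  ultimately show thesis
    using t0 that by blast
qed

text \<open>At the last time \<open>t0\<close> at which \<open>e\<close> equals \<open>M / k\<close>, the equation gives
  \<open>e t - e t0 \<le> M (t - t0) - k (M / k) (t - t0) = 0\<close>.\<close>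

lemma integral_equation_upper_bound:
  fixes e G :: "real \<Rightarrow> real"
  assumes "k > 0" and "M \<ge> 0" and cont: "continuous_on {0..} e"
    and eq: "\<And>t. t \<ge> 0 \<Longrightarrow> e t = G t - k * integral {0..t} e"
    and "G 0 = 0" and G_le: "\<And>s t. 0 \<le> s \<Longrightarrow> s \<le> t \<Longrightarrow> G t - G s \<le> M * (t - s)"
    and "0 \<le> t"
  shows "e t \<le> M / k"
proof (rule ccontr)
  assume "\<not> e t \<le> M / k"
  moreover have "e 0 \<le> M / k"
    using eq[of 0] assms(1,2,5) by simp
  moreover have "continuous_on {0..t} e"
    using cont by (rule continuous_on_subset) auto
  ultimately obtain t0 where t0: "t0 \<in> {0..t}" "e t0 = M / k"
    and ge: "\<And>x. x \<in> {t0..t} \<Longrightarrow> M / k \<le> e x"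
    using last_level_crossing[of 0 t e "M / k"] \<open>0 \<le> t\<close> by auto
  have "e integrable_on {0..t}"
    using \<open>continuous_on {0..t} e\<close> by (rule integrable_continuous_interval)
  then have "integral {0..t} e = integral {0..t0} e + integral {t0..t} e"
    using Henstock_Kurzweil_Integration.integral_combine[of 0 t0 t e] t0 by simp
  then have "e t - e t0 = (G t - G t0) - k * integral {t0..t} e"
    using eq[of t] eq[of t0] t0 by (simp add: algebra_simps)
  also have "\<dots> \<le> M * (t - t0) - k * (M / k * (t - t0))"
  proof -
    have "integral {t0..t} (\<lambda>_. M / k) \<le> integral {t0..t} e"
      using ge \<open>e integrable_on {0..t}\<close> t0
      by (intro integral_le) (auto intro: integrable_on_subinterval)
    then have "k * (M / k * (t - t0)) \<le> k * integral {t0..t} e"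
      using t0 \<open>k > 0\<close> by (simp add: mult.commute pos_divide_le_eq)
    moreover have "G t - G t0 \<le> M * (t - t0)"
      using G_le t0 by simp
    ultimately show ?thesis
      by linarith
  qed
  also have "\<dots> = 0"
    using \<open>k > 0\<close> by simp
  finally show False
    using \<open>\<not> e t \<le> M / k\<close> t0 by simp
qed

lemma has_integral_exp_decay:
  fixes k t :: real
  assumes "k > 0" and "0 \<le> t"
  shows "((\<lambda>s. exp (- k * s)) has_integral (1 - exp (- k * t)) / k) {0..t}"
proof -
  have "((\<lambda>s. exp (- k * s)) has_integral (- exp (- k * t) / k - - exp (- k * 0) / k)) {0..t}"
    using assms
    by (intro fundamental_theorem_of_calculus)
       (auto intro!: derivative_eq_intros simp flip: has_real_derivative_iff_has_vector_derivative)
  then show ?thesis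
    by (simp add: diff_divide_distrib)
qed

lemma linear_integral_equation_deviation:
  fixes w G :: "real \<Rightarrow> real"
  assumes "k > 0" and "M \<ge> 0" and cont: "continuous_on {0..} w"
    and eq: "\<And>t. t \<ge> 0 \<Longrightarrow> w t = w0 - k * integral {0..t} w + G t"
    and "G 0 = 0" and G_lip: "\<And>s t. 0 \<le> s \<Longrightarrow> s \<le> t \<Longrightarrow> \<bar>G t - G s\<bar> \<le> M * (t - s)"
    and "0 \<le> t"
  shows "\<bar>w t - w0 * exp (- k * t)\<bar> \<le> M / k"
proof -
  define e where "e t = w t - w0 * exp (- k * t)" for t
  have e_cont: "continuous_on {0..} e"
    unfolding e_def using cont by (intro continuous_intros)
  have e_eq: "e t = G t - k * integral {0..t} e" if "0 \<le> t" for t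
  proof -
    have "w integrable_on {0..t}"
      using cont by (intro integrable_continuous_interval continuous_on_subset[OF cont]) auto
    then have "(e has_integral integral {0..t} w - w0 * ((1 - exp (- k * t)) / k)) {0..t}"
      unfolding e_def using has_integral_exp_decay[OF \<open>k > 0\<close> that]
      by (intro has_integral_diff has_integral_mult_right) (auto simp: has_integral_integral)
    then have "k * integral {0..t} e = k * integral {0..t} w - w0 * (1 - exp (- k * t))"
      using \<open>k > 0\<close> by (simp add: integral_unique right_diff_distrib diff_divide_distrib)
    then show ?thesis
      using eq[OF that] by (simp add: e_def algebra_simps)
  qed
  have "e t \<le> M / k"
    by (rule integral_equation_upper_bound[where G=G])
       (use assms(1,2,5,7) e_cont e_eq G_lip in \<open>auto simp: abs_le_iff\<close>)
  moreover have "- e t \<le> M / k"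
  proof (rule integral_equation_upper_bound[where e="\<lambda>t. - e t" and G="\<lambda>t. - G t"])
    show "continuous_on {0..} (\<lambda>t. - e t)"
      using e_cont by (intro continuous_intros)
  qed (use assms(1,2,5,7) e_eq G_lip in \<open>auto simp: abs_le_iff\<close>)
  ultimately show ?thesis
    by (simp add: e_def abs_le_iff)
qed

locale two_compartment_system =
  fixes f1 f2 :: "real \<Rightarrow> real" and a1 a2 c1 c2 \<epsilon> :: real
    and u1 u2 :: "real \<Rightarrow> real"
  assumes f1_meas: "f1 \<in> borel_measurable lebesgue"
      and f2_meas: "f2 \<in> borel_measurable lebesgue"
      and f1_bdd: "bounded (range f1)" and f2_bdd: "bounded (range f2)"
      and f1_per: "\<And>x. f1 (x + 1) = f1 x" and f2_per: "\<And>x. f2 (x + 1) = f2 x"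
      and a1: "a1 > 0" and a2: "a2 > 0" and eps: "\<epsilon> > 0"
      and u1_cont: "continuous_on {0..} u1" and u2_cont: "continuous_on {0..} u2"
      and u1_sol: "\<And>t. t \<ge> 0 \<Longrightarrow> u1 t = c1 + integral {0..t}
                 (\<lambda>s. - (a1 / \<epsilon>) * (u1 s - u2 s) + f1 (s / \<epsilon>))"
      and u2_sol: "\<And>t. t \<ge> 0 \<Longrightarrow> u2 t = c2 + integral {0..t}
                 (\<lambda>s. - (a2 / \<epsilon>) * (u2 s - u1 s) + f2 (s / \<epsilon>))"
begin

lemma swap_compartments: "two_compartment_system f2 f1 a2 a1 c2 c1 \<epsilon> u2 u1"
  by unfold_locales (fact f1_meas f2_meas f1_bdd f2_bdd f1_per f2_per a1 a2 eps
      u1_cont u2_cont u1_sol u2_sol)+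

lemma difference_continuous: "continuous_on {0..} (\<lambda>s. u1 s - u2 s)"
  using u1_cont u2_cont by (intro continuous_intros)

lemma difference_integrable: "(\<lambda>s. u1 s - u2 s) integrable_on {0..t}"
  by (intro integrable_continuous_interval continuous_on_subset[OF difference_continuous]) auto

lemma u1_eq:
  assumes "0 \<le> t"
  shows "u1 t = c1 - a1 / \<epsilon> * integral {0..t} (\<lambda>s. u1 s - u2 s)
                 + integral {0..t} (\<lambda>s. f1 (s / \<epsilon>))"
proof -
  have "((\<lambda>s. - (a1 / \<epsilon>) * (u1 s - u2 s) + f1 (s / \<epsilon>)) has_integral
      - (a1 / \<epsilon>) * integral {0..t} (\<lambda>s. u1 s - u2 s)
      + integral {0..t} (\<lambda>s. f1 (s / \<epsilon>))) {0..t}"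
    using difference_integrable integrable_on_rescaled[OF f1_meas f1_bdd eps]
    by (intro has_integral_add has_integral_mult_right) (simp_all add: has_integral_integral)
  then show ?thesis
    using u1_sol[OF assms] by (simp add: integral_unique)
qed

lemma u2_eq:
  assumes "0 \<le> t"
  shows "u2 t = c2 + a2 / \<epsilon> * integral {0..t} (\<lambda>s. u1 s - u2 s)
                 + integral {0..t} (\<lambda>s. f2 (s / \<epsilon>))"
proof -
  have "((\<lambda>s. a2 / \<epsilon> * (u1 s - u2 s) + f2 (s / \<epsilon>)) has_integral
      a2 / \<epsilon> * integral {0..t} (\<lambda>s. u1 s - u2 s)
      + integral {0..t} (\<lambda>s. f2 (s / \<epsilon>))) {0..t}"
    using difference_integrable integrable_on_rescaled[OF f2_meas f2_bdd eps]
    by (intro has_integral_add has_integral_mult_right) (simp_all add: has_integral_integral)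
  moreover have "(\<lambda>s. - (a2 / \<epsilon>) * (u2 s - u1 s) + f2 (s / \<epsilon>))
      = (\<lambda>s. a2 / \<epsilon> * (u1 s - u2 s) + f2 (s / \<epsilon>))"
    by (simp add: algebra_simps)
  ultimately show ?thesis
    using u2_sol[OF assms] by (simp add: integral_unique)
qed

lemma difference_deviation:
  assumes "0 \<le> t"
  shows "\<bar>u1 t - u2 t - (c1 - c2) * exp (- ((a1 + a2) * t / \<epsilon>))\<bar>
    \<le> (Linf_norm f1 + Linf_norm f2) * \<epsilon> / (a1 + a2)"
proof -
  define G
    where "G t = integral {0..t} (\<lambda>s. f1 (s / \<epsilon>)) - integral {0..t} (\<lambda>s. f2 (s / \<epsilon>))"
    for t
  have "\<bar>G t - G s\<bar> \<le> (Linf_norm f1 + Linf_norm f2) * (t - s)" if "0 \<le> s" "s \<le> t" for s t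
    using abs_integral_rescaled_diff_le[OF f1_meas f1_bdd eps that]
      abs_integral_rescaled_diff_le[OF f2_meas f2_bdd eps that]
    unfolding G_def by (simp add: abs_le_iff algebra_simps)
  moreover have "u1 t - u2 t
      = (c1 - c2) - (a1 + a2) / \<epsilon> * integral {0..t} (\<lambda>s. u1 s - u2 s) + G t"
    if "0 \<le> t" for t
    using u1_eq[OF that] u2_eq[OF that] unfolding G_def
    by (simp add: algebra_simps add_divide_distrib)
  ultimately have "\<bar>u1 t - u2 t - (c1 - c2) * exp (- ((a1 + a2) / \<epsilon>) * t)\<bar>
      \<le> (Linf_norm f1 + Linf_norm f2) / ((a1 + a2) / \<epsilon>)"
    using a1 a2 eps assms Linf_norm_nonneg[of f1] Linf_norm_nonneg[of f2]
    by (intro linear_integral_equation_deviation[where w="\<lambda>t. u1 t - u2 t" and G=G])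
       (auto simp: G_def difference_continuous)
  then show ?thesis
    by simp
qed

lemma weighted_mean_deviation:
  assumes "0 \<le> t"
  shows "\<bar>a2 * u1 t + a1 * u2 t - (a2 * c1 + a1 * c2)
           - (a2 * integral {0..1} f1 + a1 * integral {0..1} f2) * t\<bar>
    \<le> 2 * \<epsilon> * (a2 * Linf_norm f1 + a1 * Linf_norm f2)"
proof -
  have "a2 * u1 t + a1 * u2 t - (a2 * c1 + a1 * c2)
           - (a2 * integral {0..1} f1 + a1 * integral {0..1} f2) * t
      = a2 * (integral {0..t} (\<lambda>s. f1 (s / \<epsilon>)) - t * integral {0..1} f1)
        + a1 * (integral {0..t} (\<lambda>s. f2 (s / \<epsilon>)) - t * integral {0..1} f2)"
    unfolding u1_eq[OF assms] u2_eq[OF assms] by (simp add: algebra_simps)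
  also have "\<bar>\<dots>\<bar> \<le> a2 * (2 * \<epsilon> * Linf_norm f1) + a1 * (2 * \<epsilon> * Linf_norm f2)"
    using abs_integral_rescaled_periodic_sub_le[OF f1_meas f1_bdd f1_per eps assms]
      abs_integral_rescaled_periodic_sub_le[OF f2_meas f2_bdd f2_per eps assms] a1 a2
    by (intro order_trans[OF abs_triangle_ineq] add_mono) (simp_all add: abs_mult)
  finally show ?thesis
    by (simp add: algebra_simps)
qed

lemma u1_deviation:
  assumes "0 \<le> t"
  shows "\<bar>u1 t - ((c1 * a2 + c2 * a1) / (a1 + a2)
              + (a2 * integral {0..1} f1 + a1 * integral {0..1} f2) / (a1 + a2) * t
              + a1 * (c1 - c2) / (a1 + a2) * exp (- ((a1 + a2) * t / \<epsilon>)))\<bar>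
       \<le> ((2 * a2 * (a1 + a2) + a1) / (a1 + a2)^2 * Linf_norm f1
           + (2 * a1 * (a1 + a2) + a1) / (a1 + a2)^2 * Linf_norm f2) * \<epsilon>"
proof -
  define A where "A = a1 + a2"
  define E where "E = exp (- ((a1 + a2) * t / \<epsilon>))"
  define X where "X = a2 * u1 t + a1 * u2 t - (a2 * c1 + a1 * c2)
           - (a2 * integral {0..1} f1 + a1 * integral {0..1} f2) * t"
  define Y where "Y = u1 t - u2 t - (c1 - c2) * E"
  have "A > 0"
    using a1 a2 by (simp add: A_def)
  have "u1 t - ((c1 * a2 + c2 * a1) / A
        + (a2 * integral {0..1} f1 + a1 * integral {0..1} f2) / A * t
        + a1 * (c1 - c2) / A * E) = (X + a1 * Y) / A"
    using \<open>A > 0\<close> by (simp add: field_simps) (simp add: X_def Y_def A_def algebra_simps)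
  also have "\<bar>\<dots>\<bar> \<le> (2 * \<epsilon> * (a2 * Linf_norm f1 + a1 * Linf_norm f2)
                    + a1 * ((Linf_norm f1 + Linf_norm f2) * \<epsilon> / A)) / A"
  proof -
    have "\<bar>X + a1 * Y\<bar> \<le> 2 * \<epsilon> * (a2 * Linf_norm f1 + a1 * Linf_norm f2)
                    + a1 * ((Linf_norm f1 + Linf_norm f2) * \<epsilon> / A)"
      using weighted_mean_deviation[OF assms] difference_deviation[OF assms] a1
      unfolding X_def Y_def A_def E_def
      by (intro order_trans[OF abs_triangle_ineq] add_mono)
         (simp_all add: abs_mult mult_left_mono del: times_divide_eq_right)
    then show ?thesis
      using \<open>A > 0\<close> by (simp add: abs_divide divide_right_mono)
  qed
  also have "\<dots> = ((2 * a2 * A + a1) / A^2 * Linf_norm f1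
      + (2 * a1 * A + a1) / A^2 * Linf_norm f2) * \<epsilon>"
    using \<open>A > 0\<close> by (simp add: field_simps power2_eq_square)
  finally show ?thesis
    unfolding A_def E_def .
qed

end

theorem theorem1p6:
  fixes f1 f2 :: "real \<Rightarrow> real" and a1 a2 c1 c2 \<epsilon> :: real
    and u1 u2 :: "real \<Rightarrow> real"
  assumes f1_meas: "f1 \<in> borel_measurable lebesgue"
      and f2_meas: "f2 \<in> borel_measurable lebesgue"
      and f1_bdd: "bounded (range f1)" and f2_bdd: "bounded (range f2)"
      and f1_per: "\<And>x. f1 (x + 1) = f1 x" and f2_per: "\<And>x. f2 (x + 1) = f2 x"
      and a1: "a1 > 0" and a2: "a2 > 0" and eps: "\<epsilon> > 0"
      and u1_cont: "continuous_on {0..} u1" and u2_cont: "continuous_on {0..} u2"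
      and u1_sol: "\<And>t. t \<ge> 0 \<Longrightarrow> u1 t = c1 + integral {0..t}
                 (\<lambda>s. - (a1 / \<epsilon>) * (u1 s - u2 s) + f1 (s / \<epsilon>))"
      and u2_sol: "\<And>t. t \<ge> 0 \<Longrightarrow> u2 t = c2 + integral {0..t}
                 (\<lambda>s. - (a2 / \<epsilon>) * (u2 s - u1 s) + f2 (s / \<epsilon>))"
  shows "\<forall>t>0.
     \<bar>u1 t - ((c1 * a2 + c2 * a1) / (a1 + a2)
              + (a2 * integral {0..1} f1 + a1 * integral {0..1} f2) / (a1 + a2) * t
              + a1 * (c1 - c2) / (a1 + a2) * exp (- ((a1 + a2) * t / \<epsilon>)))\<bar>
       \<le> ((2 * a2 * (a1 + a2) + a1) / (a1 + a2)^2 * Linf_norm f1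
           + (2 * a1 * (a1 + a2) + a1) / (a1 + a2)^2 * Linf_norm f2) * \<epsilon>
   \<and> \<bar>u2 t - ((c1 * a2 + c2 * a1) / (a1 + a2)
              + (a2 * integral {0..1} f1 + a1 * integral {0..1} f2) / (a1 + a2) * t
              + a2 * (c2 - c1) / (a1 + a2) * exp (- ((a1 + a2) * t / \<epsilon>)))\<bar>
       \<le> ((2 * a2 * (a1 + a2) + a2) / (a1 + a2)^2 * Linf_norm f1
           + (2 * a1 * (a1 + a2) + a2) / (a1 + a2)^2 * Linf_norm f2) * \<epsilon>"
proof -
  interpret two_compartment_system f1 f2 a1 a2 c1 c2 \<epsilon> u1 u2
    by unfold_locales (fact assms)+
  interpret swapped: two_compartment_system f2 f1 a2 a1 c2 c1 \<epsilon> u2 u1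
    by (rule swap_compartments)
  show ?thesis
    using u1_deviation swapped.u1_deviation by (simp add: less_imp_le ac_simps)
qed

end
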